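(* Let $R$ be a uniparameter QNA satisfying Hypothesis (H), with $C$ as in that hypothesis. For each $k\in[1,N]\setminus C$, the quantum torus $\mathcal Q_k$ generated by $\{y_i^{\pm1}: i\in[1,N]\setminus(C\cup\{k\})\}$ contains a non-trivial central monomial $\prod_{i\in[1,N]\setminus(C\cup\{k\})}y_i^{m_i}$, i.e. one with at least one $m_i\neq0$.
   Context: ${\mathbb K}$ is a field of characteristic $0$. A quantum nilpotent algebra (QNA) is an iterated Ore extension $R={\mathbb K}[x_1][x_2;\sigma_2,\delta_2]\cdots[x_N;\sigma_N,\delta_N]$, where $R_k={\mathbb K}[x_1][x_2;\sigma_2,\delta_2]\cdots[x_k;\sigma_k,\delta_k]$ ($R_0={\mathbb K}$), $\sigma_k$ is a ${\mathbb K}$-automorphism and $\delta_k$ a $\sigma_k$-derivation of $R_{k-1}$, together with a torus $\mathcal H$ acting rationally by ${\mathbb K}$-automorphisms on $R$ with each $x_i$ an $\mathcal H$-eigenvector, such that: (i) $\sigma_k(x_j)=\lambda_{kj}x_j$ for $j<k$, with $\lambda_{kj}\in{\mathbb K}^*$; (ii) $\delta_k$ is locally nilpotent on $R_{k-1}$; (iii) for each $k$ there exist $h_k\in\mathcal H$ and $q_k\in{\mathbb K}^*$ not a root of unity such that $h_k$ acts on $R_{k-1}$ as $\sigma_k$ and $h_k\cdot x_k=q_kx_k$. It is uniparameter if there are $q\in{\mathbb K}^*$ not a root of unity and a skew-symmetric integer matrix $(a_{ij})$ with $\lambda_{kj}=q^{a_{kj}}$ for all $j<k$. The rank is $n=|\{k:\delta_k=0\}|$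 and $\mathcal H=({\mathbb K}^* )^n$ is taken maximal. Homogeneous elements are the $\mathcal H$-eigenvectors. Goodearl–Yakimov elements: there is a surjective map $\mu:[1,N]\to[1,n]$ with predecessor $p(k)=\max\{j<k:\mu(j)=\mu(k)\}$ (or $-\infty$) and successor $s(k)=\min\{j>k:\mu(j)=\mu(k)\}$ (or $+\infty$), and homogeneous elements $y_1,\ldots,y_N\in R$, uniquely determined, with $y_k=x_k$ if $p(k)=-\infty$ and $y_k=y_{p(k)}x_k-c_k$ for some $c_k\in R_{k-1}$ otherwise, such that for every $k$ the set $\{y_j:j\le k,\ s(j)>k\}$ is, up to nonzero scalars, the set of homogeneous prime elements (nonzero normal elements $p$ with $pR$ completely prime) of $R_k$. They satisfy $y_jy_i=q_{ij}y_iy_j$ with $q_{ij}$ powers of $q$; $\mathcal A_{\mathbf q}\subseteq R$ is the quantum affine space they generate and $\mathcal T_{\mathbf q}=R[y_1^{-1},\ldots,y_N^{-1}]$ the associated quantum torus. Let $\mathfrak s_{+\infty}=\{k:s(k)=+\infty\}$. The center $\operatorname{Z}(\mathcal T_{\mathbf q})$ is a Laurent polynomial ring ${\mathbb K}[z_1^{\pm1},\ldots,z_\ell^{\pm1}]$ whose generators can be chosen to be Laurent monomials in the $y_j$, $j\in\mathfrak s_{+\infty}$; for such a monomial $z$, $\operatorname{supp}z$ is the set of $j\in\mathfrak s_{+\infty}$ whose exponent in $z$ is nonzero. Hypothesis (H): there exist such monomial generators $z_1,\ldots,z_\ell$ of $\operatorname{Z}(\mathcal T_{\mathbf q})$ and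 a subset $C=\{c_1,\ldots,c_\ell\}\subseteq\mathfrak s_{+\infty}$ with $|C|=\ell$ such that for all $i\in[1,\ell]$: (H1) $z_i\in\mathcal A_{\mathbf q}$; (H2) the exponent of $y_{c_j}$ in $z_i$ is $\delta_{ij}$ for all $j$; (H3) if $|\operatorname{supp}z_i|\ge2$ then $\operatorname{supp}z_i\setminus\{c_i\}\not\subseteq\bigcup_{j\neq i}\operatorname{supp}z_j$. *)

theory Defs
  imports Main
begin

text \<open>Quantum torus on generators y_1,...,y_N with y_j y_i = q^(b i j) y_i y_j.
  Exponent vectors are functions nat => int vanishing outside {1..N};
  an element is a finitely supported K-valued function on exponent vectors,
  the coefficient of the ordered monomial y_1^(m 1) ... y_N^(m N).\<close>

definition expv :: "nat \<Rightarrow> (nat \<Rightarrow> int) set" where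
  "expv N = {m. \<forall>i. i \<notin> {1..N} \<longrightarrow> m i = 0}"

text \<open>Ordered monomials multiply as y^m y^n = q^(qexp b N m n) y^(m+n).\<close>
definition qexp :: "(nat \<Rightarrow> nat \<Rightarrow> int) \<Rightarrow> nat \<Rightarrow> (nat \<Rightarrow> int) \<Rightarrow> (nat \<Rightarrow> int) \<Rightarrow> int" where
  "qexp b N m n = (\<Sum>i\<in>{1..N}. \<Sum>j\<in>{i<..N}. b i j * m j * n i)"

definition qtorus :: "nat \<Rightarrow> ((nat \<Rightarrow> int) \<Rightarrow> 'a::field) set" where
  "qtorus N = {f. finite {m. f m \<noteq> 0} \<and> {m. f m \<noteq> 0} \<subseteq> expv N}"

definition qmult :: "'a::field \<Rightarrow> (nat \<Rightarrow> nat \<Rightarrow> int) \<Rightarrow> nat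
    \<Rightarrow> ((nat \<Rightarrow> int) \<Rightarrow> 'a) \<Rightarrow> ((nat \<Rightarrow> int) \<Rightarrow> 'a) \<Rightarrow> ((nat \<Rightarrow> int) \<Rightarrow> 'a)" where
  "qmult q b N f g = (\<lambda>p. \<Sum>m\<in>{m. f m \<noteq> 0}.
      q powi (qexp b N m (\<lambda>i. p i - m i)) * f m * g (\<lambda>i. p i - m i))"

definition qmono :: "(nat \<Rightarrow> int) \<Rightarrow> ((nat \<Rightarrow> int) \<Rightarrow> 'a::field)" where
  "qmono m = (\<lambda>p. if p = m then 1 else 0)"

definition qsubtorus :: "nat \<Rightarrow> nat set \<Rightarrow> ((nat \<Rightarrow> int) \<Rightarrow> 'a::field) set" where
  "qsubtorus N S = {f \<in> qtorus N. \<forall>m. f m \<noteq> 0 \<longrightarrow> (\<forall>i. i \<notin> S \<longrightarrow> m i = 0)}"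

definition qcenter :: "'a::field \<Rightarrow> (nat \<Rightarrow> nat \<Rightarrow> int) \<Rightarrow> nat \<Rightarrow> ((nat \<Rightarrow> int) \<Rightarrow> 'a) set" where
  "qcenter q b N = {f \<in> qtorus N. \<forall>g \<in> qtorus N. qmult q b N f g = qmult q b N g f}"

text \<open>Exponent vector of z_1^(a 1) ... z_l^(a l) where z_i = y^(e i) (up to scalar).\<close>
definition lcomb :: "nat \<Rightarrow> (nat \<Rightarrow> nat \<Rightarrow> int) \<Rightarrow> (nat \<Rightarrow> int) \<Rightarrow> (nat \<Rightarrow> int)" where
  "lcomb l e a = (\<lambda>j. \<Sum>i\<in>{1..l}. a i * e i j)"

definition esupp :: "nat set \<Rightarrow> (nat \<Rightarrow> int) \<Rightarrow> nat set" where
  "esupp S m = {j \<in> S. m j \<noteq> 0}"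

end

theory Submission
  imports Defs "Jordan_Normal_Form.Determinant"
begin

(* The exponent of q in the commutator of y^m and y^n is the skew-symmetric form n^T M m with
   M = qskew b, so y^m commutes with the sub-torus on an index set T exactly when m lies in the
   kernel of the principal submatrix M_T.  Let U = [1,N] - C.  Then M_U is nonsingular: for a
   kernel vector v of M_U, pairing with the central monomials z_t (which by (H2) meet C only in
   c_t) kills the rows of M v indexed by C as well, so y^v is central; hence v is an exponent
   combination of the z_t vanishing at every c_t, i.e. v = 0.  A nonsingular skew-symmetric
   matrix has even size, so T = U - {k} has odd size and M_T, being singular, has a nonzero
   kernel vector. *)

lemma qmono_in_qtorus: "m \<in> expv N \<Longrightarrow> (qmono m :: _ \<Rightarrow> 'a::field) \<in> qtorus N"
proof -
  assume "m \<in> expv N"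
  moreover have "{p. (qmono m :: _ \<Rightarrow> 'a) p \<noteq> 0} = {m}" by (auto simp: qmono_def)
  ultimately show ?thesis unfolding qtorus_def by simp
qed

lemma qsubtorus_full: "qsubtorus N {1..N} = qtorus N"
  unfolding qsubtorus_def qtorus_def expv_def by blast

lemma qmult_qmono_left:
  "qmult q b N (qmono m) g = (\<lambda>p. q powi qexp b N m (\<lambda>i. p i - m i) * g (\<lambda>i. p i - m i))"
proof -
  have "{m'. (qmono m :: _ \<Rightarrow> 'a) m' \<noteq> 0} = {m}" by (auto simp: qmono_def)
  then show ?thesis unfolding qmult_def by (simp add: qmono_def)
qed

lemma qmult_qmono_right:
  assumes fin: "finite {m. g m \<noteq> 0}"
  shows "qmult q b N g (qmono m) = (\<lambda>p. q powi qexp b N (\<lambda>i. p i - m i) m * g (\<lambda>i. p i - m i))"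
proof
  fix p
  let ?x = "\<lambda>i. p i - m i"
  have shift: "((\<lambda>i. p i - m' i) = m) = (m' = ?x)" for m'
    by (auto simp: fun_eq_iff algebra_simps)
  have "qmult q b N g (qmono m) p
      = (\<Sum>m'\<in>{m. g m \<noteq> 0}. if m' = ?x then q powi qexp b N m' (\<lambda>i. p i - m' i) * g m' else 0)"
    unfolding qmult_def qmono_def by (intro sum.cong) (auto simp: shift)
  also have "\<dots> = (if g ?x \<noteq> 0 then q powi qexp b N ?x (\<lambda>i. p i - ?x i) * g ?x else 0)"
    using fin by simp
  also have "(\<lambda>i. p i - ?x i) = m" by auto
  finally show "qmult q b N g (qmono m) p = q powi qexp b N ?x m * g ?x" by auto
qed

lemma qmult_qmono_commute:
  assumes fin: "finite {m. g m \<noteq> 0}"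
    and sym: "\<And>n. g n \<noteq> 0 \<Longrightarrow> qexp b N m n = qexp b N n m"
  shows "qmult q b N (qmono m) g = qmult q b N g (qmono m)"
  unfolding qmult_qmono_left qmult_qmono_right[OF fin]
  using sym by (fastforce simp: fun_eq_iff)

lemma power_int_inj_not_root_of_unity:
  fixes q :: "'a::field"
  assumes q_nz: "q \<noteq> 0" and q_not_root: "\<forall>n::nat. n > 0 \<longrightarrow> q ^ n \<noteq> 1"
    and eq: "q powi x = q powi y"
  shows "x = y"
proof -
  have no_gap: "\<not> d < d'" if "q powi d = q powi d'" for d d' :: int
  proof
    assume "d < d'"
    then have "q ^ nat (d' - d) = q powi (d' - d)" by (simp add: power_int_of_nat[symmetric])
    also have "\<dots> = 1" using that q_nz by (simp add: power_int_diff)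
    finally show False using q_not_root \<open>d < d'\<close> by simp
  qed
  show ?thesis using no_gap[OF eq] no_gap[OF eq[symmetric]] by simp
qed

lemma qexp_commute_of_central:
  fixes q :: "'a::field"
  assumes q_nz: "q \<noteq> 0" and q_not_root: "\<forall>n::nat. n > 0 \<longrightarrow> q ^ n \<noteq> 1"
    and central: "(qmono m :: _ \<Rightarrow> 'a) \<in> qcenter q b N" and n: "n \<in> expv N"
  shows "qexp b N m n = qexp b N n m"
proof -
  have "qmult q b N (qmono m) (qmono n) = qmult q b N (qmono n) (qmono m :: _ \<Rightarrow> 'a)"
    using central qmono_in_qtorus[OF n] unfolding qcenter_def by blast
  from fun_cong[OF this, of "\<lambda>i. m i + n i"]
  have "q powi qexp b N m n = q powi qexp b N n m"
    unfolding qmult_qmono_left by (simp add: qmono_def)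
  then show ?thesis by (rule power_int_inj_not_root_of_unity[OF q_nz q_not_root])
qed

text \<open>\<^const>\<open>qexp\<close> only reads \<open>b\<close> above the diagonal; \<open>qskew b\<close> is the skew-symmetric
  matrix it determines.\<close>
definition qskew :: "(nat \<Rightarrow> nat \<Rightarrow> int) \<Rightarrow> nat \<Rightarrow> nat \<Rightarrow> int" where
  "qskew b i j = (if i < j then b i j else if j < i then - b j i else 0)"

lemma qskew_skew: "qskew b i j = - qskew b j i"
  by (auto simp: qskew_def)

lemma qexp_as_square_sum:
  "qexp b N m n = (\<Sum>i\<in>{1..N}. \<Sum>j\<in>{1..N}. (if i < j then b i j else 0) * m j * n i)"
proof -
  have "(\<Sum>j\<in>{i<..N}. b i j * m j * n i) = (\<Sum>j\<in>{1..N}. (if i < j then b i j else 0) * m j * n i)"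
    if "i \<in> {1..N}" for i
    using that by (intro sum.mono_neutral_cong_left) auto
  then show ?thesis unfolding qexp_def by (rule sum.cong[OF refl])
qed

lemma qexp_diff_qskew:
  "qexp b N m n - qexp b N n m = (\<Sum>i\<in>{1..N}. n i * (\<Sum>j\<in>{1..N}. qskew b i j * m j))"
proof -
  have "qexp b N n m = (\<Sum>i\<in>{1..N}. \<Sum>j\<in>{1..N}. (if j < i then b j i else 0) * n i * m j)"
    unfolding qexp_as_square_sum by (rule sum.swap)
  then have "qexp b N m n - qexp b N n m = (\<Sum>i\<in>{1..N}. \<Sum>j\<in>{1..N}.
      (if i < j then b i j else 0) * m j * n i - (if j < i then b j i else 0) * n i * m j)"
    unfolding qexp_as_square_sum[of b N m n] by (simp add: sum_subtractf)
  also have "\<dots> = (\<Sum>i\<in>{1..N}. \<Sum>j\<in>{1..N}. n i * (qskew b i j * m j))"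
    by (intro sum.cong refl) (simp add: qskew_def algebra_simps)
  finally show ?thesis by (simp add: sum_distrib_left)
qed

lemma qexp_commute_of_kernel:
  assumes S: "S \<subseteq> {1..N}"
    and m_supp: "\<forall>x. x \<notin> S \<longrightarrow> m x = 0" and n_supp: "\<forall>x. x \<notin> S \<longrightarrow> n x = 0"
    and ker: "\<forall>i\<in>S. (\<Sum>j\<in>S. qskew b i j * m j) = 0"
  shows "qexp b N m n = qexp b N n m"
proof -
  have restrict: "(\<Sum>j\<in>{1..N}. qskew b i j * m j) = (\<Sum>j\<in>S. qskew b i j * m j)" for i
    using S m_supp by (intro sum.mono_neutral_right) auto
  have "qexp b N m n - qexp b N n m = (\<Sum>i\<in>S. n i * (\<Sum>j\<in>S. qskew b i j * m j))"
    unfolding qexp_diff_qskew restrict using S n_supp by (intro sum.mono_neutral_right) auto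
  also have "\<dots> = 0" using ker by simp
  finally show ?thesis by simp
qed

lemma qmono_commute_qsubtorus:
  assumes S: "S \<subseteq> {1..N}" and m_supp: "\<forall>x. x \<notin> S \<longrightarrow> m x = 0"
    and ker: "\<forall>i\<in>S. (\<Sum>j\<in>S. qskew b i j * m j) = 0"
    and g: "g \<in> qsubtorus N S"
  shows "qmult q b N (qmono m) g = qmult q b N g (qmono m)"
proof (rule qmult_qmono_commute)
  show "finite {m. g m \<noteq> 0}" using g unfolding qsubtorus_def qtorus_def by blast
  fix n assume "g n \<noteq> 0"
  then have "\<forall>x. x \<notin> S \<longrightarrow> n x = 0" using g unfolding qsubtorus_def by blast
  then show "qexp b N m n = qexp b N n m" by (rule qexp_commute_of_kernel[OF S m_supp _ ker])
qed

lemma det_skew_odd: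
  fixes A :: "'a::{idom,ring_char_0} mat"
  assumes A: "A \<in> carrier_mat n n" and skew: "transpose_mat A = (-1) \<cdot>\<^sub>m A" and odd: "odd n"
  shows "det A = 0"
proof -
  have "det A = det (transpose_mat A)" using det_transpose[OF A] by simp
  also have "\<dots> = - det A" unfolding skew using A odd by simp
  finally show ?thesis by simp
qed

lemma skew_odd_kernel:
  fixes M :: "nat \<Rightarrow> nat \<Rightarrow> 'a::{idom,ring_char_0}"
  assumes fin: "finite S" and odd: "odd (card S)" and skew: "\<And>i j. M i j = - M j i"
  shows "\<exists>m. (\<forall>x. x \<notin> S \<longrightarrow> m x = 0) \<and> (\<exists>x\<in>S. m x \<noteq> 0) \<and>
            (\<forall>i\<in>S. (\<Sum>j\<in>S. M i j * m j) = 0)"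
proof -
  let ?n = "card S"
  obtain f where f: "bij_betw f {0..<?n} S" using ex_bij_betw_nat_finite[OF fin] by blast
  define A where "A = mat ?n ?n (\<lambda>(a, c). M (f a) (f c))"
  have A: "A \<in> carrier_mat ?n ?n" unfolding A_def by simp
  have "transpose_mat A = (-1) \<cdot>\<^sub>m A"
  proof (rule eq_matI)
    fix i j assume "i < dim_row ((-1) \<cdot>\<^sub>m A)" "j < dim_col ((-1) \<cdot>\<^sub>m A)"
    then show "transpose_mat A $$ (i, j) = ((-1) \<cdot>\<^sub>m A) $$ (i, j)"
      using A skew[of "f j" "f i"] unfolding A_def by simp
  qed (use A in auto)
  then have "det A = 0" by (rule det_skew_odd[OF A _ odd])
  then obtain v where v: "v \<in> carrier_vec ?n" "v \<noteq> 0\<^sub>v ?n" "A *\<^sub>v v = 0\<^sub>v ?n"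
    using det_0_iff_vec_prod_zero[OF A] by blast
  define g where "g = the_inv_into {0..<?n} f"
  have fg: "f (g x) = x" "g x < ?n" if "x \<in> S" for x
    using that f unfolding g_def
    by (metis bij_betw_def f_the_inv_into_f the_inv_into_into atLeastLessThan_iff subset_refl)+
  have gf: "g (f a) = a" if "a < ?n" for a
    using that f unfolding g_def by (simp add: bij_betw_def the_inv_into_f_f)
  define m where "m x = (if x \<in> S then v $ g x else 0)" for x
  have mf: "m (f a) = v $ a" if "a < ?n" for a
    using that f gf unfolding m_def by (auto simp: bij_betw_def)
  obtain a where a: "a < ?n" "v $ a \<noteq> 0"
    using v(1,2) by (metis carrier_vecD eq_vecI index_zero_vec(1,2))
  have nonzero: "\<exists>x\<in>S. m x \<noteq> 0"
    using a mf f by (intro bexI[of _ "f a"]) (auto simp: bij_betw_def)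
  have "(\<Sum>j\<in>S. M i j * m j) = 0" if i: "i \<in> S" for i
  proof -
    have "(\<Sum>j\<in>S. M i j * m j) = (\<Sum>c\<in>{0..<?n}. M (f (g i)) (f c) * v $ c)"
      using sum.reindex_bij_betw[OF f, of "\<lambda>j. M i j * m j"] fg[OF i] mf by simp
    also have "\<dots> = (A *\<^sub>v v) $ g i"
      using fg[OF i] v(1) unfolding A_def
      by (auto simp: mult_mat_vec_def scalar_prod_def intro!: sum.cong)
    also have "\<dots> = 0" using v(3) fg[OF i] by simp
    finally show ?thesis .
  qed
  then show ?thesis using nonzero by (intro exI[of _ m]) (auto simp: m_def)
qed

lemma qskew_kernel_off_pivots_trivial:
  fixes q :: "'a::field"
  assumes q_nz: "q \<noteq> 0" and q_not_root: "\<forall>n::nat. n > 0 \<longrightarrow> q ^ n \<noteq> 1"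
    and center: "qcenter q b N =
        {f \<in> qtorus N. \<forall>m. f m \<noteq> 0 \<longrightarrow> (\<exists>a. m = lcomb l e a)}"
    and e_expv: "\<forall>t\<in>{1..l}. e t \<in> expv N"
    and pivots: "\<forall>i\<in>{1..l}. \<forall>j\<in>{1..l}. e i (c j) = (if i = j then 1 else 0)"
    and v_supp: "\<forall>x. x \<notin> {1..N} - c ` {1..l} \<longrightarrow> v x = 0"
    and v_ker: "\<forall>i\<in>{1..N} - c ` {1..l}. (\<Sum>j\<in>{1..N} - c ` {1..l}. qskew b i j * v j) = 0"
  shows "v = (\<lambda>_. 0)"
proof -
  define U where "U = {1..N} - c ` {1..l}"
  define L where "L i = (\<Sum>j\<in>{1..N}. qskew b i j * v j)" for i
  have v_expv: "v \<in> expv N" using v_supp unfolding expv_def by blast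
  have e_central: "(qmono (e t) :: _ \<Rightarrow> 'a) \<in> qcenter q b N" if t: "t \<in> {1..l}" for t
  proof -
    have "e t = lcomb l e (\<lambda>i. if i = t then 1 else 0)"
      using t by (simp add: lcomb_def fun_eq_iff if_distrib[of "\<lambda>x. x * _"] cong: if_cong)
    then show ?thesis
      unfolding center using qmono_in_qtorus[OF e_expv[rule_format, OF t]]
      by (auto simp: qmono_def)
  qed
  have L_U: "L i = 0" if "i \<in> U" for i
  proof -
    have "L i = (\<Sum>j\<in>U. qskew b i j * v j)"
      unfolding L_def U_def using v_supp by (intro sum.mono_neutral_right) auto
    then show ?thesis using v_ker that unfolding U_def by simp
  qed
  have L_pivot: "L (c t) = 0" if t: "t \<in> {1..l}" for t
  proof -
    have "e t (c t) = 1" using pivots t by simp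
    then have ct: "c t \<in> {1..N}" using e_expv t unfolding expv_def by force
    have "0 = qexp b N v (e t) - qexp b N (e t) v"
      using qexp_commute_of_central[OF q_nz q_not_root e_central[OF t] v_expv] by simp
    also have "\<dots> = (\<Sum>i\<in>{1..N}. e t i * L i)" unfolding qexp_diff_qskew L_def ..
    also have "\<dots> = e t (c t) * L (c t) + (\<Sum>i\<in>{1..N} - {c t}. e t i * L i)"
      using ct by (simp add: sum.remove)
    also have "(\<Sum>i\<in>{1..N} - {c t}. e t i * L i) = 0"
    proof (intro sum.neutral ballI)
      fix i assume i: "i \<in> {1..N} - {c t}"
      show "e t i * L i = 0"
      proof (cases "i \<in> U")
        case False
        then obtain s where "s \<in> {1..l}" "i = c s" using i unfolding U_def by blast
        then show ?thesis using pivots t i by auto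
      qed (simp add: L_U)
    qed
    finally show ?thesis using pivots t by simp
  qed
  have v_supp_N: "\<forall>x. x \<notin> {1..N} \<longrightarrow> v x = 0" using v_supp by blast
  have v_ker_N: "\<forall>i\<in>{1..N}. (\<Sum>j\<in>{1..N}. qskew b i j * v j) = 0"
    using L_U L_pivot unfolding L_def U_def by blast
  have "(qmono v :: _ \<Rightarrow> 'a) \<in> qcenter q b N"
    unfolding qcenter_def
  proof (intro CollectI conjI ballI qmono_in_qtorus[OF v_expv])
    fix g :: "(nat \<Rightarrow> int) \<Rightarrow> 'a" assume "g \<in> qtorus N"
    then show "qmult q b N (qmono v) g = qmult q b N g (qmono v)"
      unfolding qsubtorus_full[symmetric] by (rule qmono_commute_qsubtorus[OF order_refl v_supp_N v_ker_N])
  qed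
  then obtain a where a: "v = lcomb l e a"
    unfolding center by (force simp: qmono_def)
  have "a t = 0" if t: "t \<in> {1..l}" for t
  proof -
    have "c t \<notin> {1..N} - c ` {1..l}" using t by blast
    then have "0 = lcomb l e a (c t)" using v_supp unfolding a by simp
    also have "\<dots> = (\<Sum>i\<in>{1..l}. if i = t then a i else 0)"
      unfolding lcomb_def using pivots t by (intro sum.cong) auto
    also have "\<dots> = a t" using t by simp
    finally show ?thesis by simp
  qed
  then show ?thesis unfolding a lcomb_def by simp
qed

theorem lemma5p1:
  fixes q :: "'a::field_char_0" and b :: "nat \<Rightarrow> nat \<Rightarrow> int"
    and N l k :: nat and Sinf :: "nat set"
    and e :: "nat \<Rightarrow> nat \<Rightarrow> int" and c :: "nat \<Rightarrow> nat"
  assumes q_nz: "q \<noteq> 0"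
    and q_not_root: "\<forall>n::nat. n > 0 \<longrightarrow> q ^ n \<noteq> 1"
    and b_skew: "\<forall>i\<in>{1..N}. \<forall>j\<in>{1..N}. b i j = - b j i"
    and Sinf: "Sinf \<subseteq> {1..N}"
    and e_supp: "\<forall>i\<in>{1..l}. \<forall>j. j \<notin> Sinf \<longrightarrow> e i j = 0"
    and center: "qcenter q b N =
        {f \<in> qtorus N. \<forall>m. f m \<noteq> 0 \<longrightarrow> (\<exists>a. m = lcomb l e a)}"
    and laurent_indep: "inj_on (lcomb l e) {a. \<forall>i. i \<notin> {1..l} \<longrightarrow> a i = 0}"
    and C_sub: "c ` {1..l} \<subseteq> Sinf"
    and C_card: "card (c ` {1..l}) = l"
    and H1: "\<forall>i\<in>{1..l}. \<forall>j. e i j \<ge> 0"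
    and H2: "\<forall>i\<in>{1..l}. \<forall>j\<in>{1..l}. e i (c j) = (if i = j then 1 else 0)"
    and H3: "\<forall>i\<in>{1..l}. card (esupp Sinf (e i)) \<ge> 2 \<longrightarrow>
        \<not> (esupp Sinf (e i) - {c i} \<subseteq> (\<Union>j\<in>{1..l} - {i}. esupp Sinf (e j)))"
    and k: "k \<in> {1..N} - c ` {1..l}"
  shows "\<exists>m \<in> expv N. (\<forall>i\<in>c ` {1..l} \<union> {k}. m i = 0) \<and> m \<noteq> (\<lambda>_. 0) \<and>
     (\<forall>g \<in> qsubtorus N ({1..N} - (c ` {1..l} \<union> {k})).
        qmult q b N (qmono m) g = qmult q b N g (qmono m))"
proof -
  define U where "U = {1..N} - c ` {1..l}"
  define T where "T = {1..N} - (c ` {1..l} \<union> {k})"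
  have e_expv: "\<forall>t\<in>{1..l}. e t \<in> expv N" using e_supp Sinf unfolding expv_def by blast
  have "even (card U)"
  proof (rule ccontr)
    assume "odd (card U)"
    then obtain v where "\<forall>x. x \<notin> U \<longrightarrow> v x = 0" "\<exists>x\<in>U. v x \<noteq> 0"
        "\<forall>i\<in>U. (\<Sum>j\<in>U. qskew b i j * v j) = 0"
      using skew_odd_kernel[of U "qskew b"] qskew_skew unfolding U_def by blast
    then show False
      using qskew_kernel_off_pivots_trivial[OF q_nz q_not_root center e_expv H2, of v]
      unfolding U_def by auto
  qed
  moreover have "card T = card U - 1" "card U > 0"
    using k unfolding T_def U_def by (auto simp: card_gt_0_iff Diff_insert[symmetric])
  ultimately have "odd (card T)" by (cases "card U") auto
  then obtain m where m_supp: "\<forall>x. x \<notin> T \<longrightarrow> m x = 0" and m_nz: "\<exists>x\<in>T. m x \<noteq> 0"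
      and m_ker: "\<forall>i\<in>T. (\<Sum>j\<in>T. qskew b i j * m j) = 0"
    using skew_odd_kernel[of T "qskew b"] qskew_skew unfolding T_def by blast
  show ?thesis
  proof (intro bexI conjI ballI)
    show "m \<in> expv N" using m_supp unfolding expv_def T_def by blast
    show "m i = 0" if "i \<in> c ` {1..l} \<union> {k}" for i using m_supp that unfolding T_def by blast
    show "m \<noteq> (\<lambda>_. 0)" using m_nz by auto
    show "qmult q b N (qmono m) g = qmult q b N g (qmono m)"
      if "g \<in> qsubtorus N ({1..N} - (c ` {1..l} \<union> {k}))" for g
      using that m_supp m_ker unfolding T_def by (intro qmono_commute_qsubtorus) auto
  qed
qed

end
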